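(* Let $p$ be a prime, $G$ a virtually free pro-$p$ group and $F$ an open normal free pro-$p$ subgroup of $G$, and suppose $C_F(t)=1$ for every torsion element $t\in G$. Then any two distinct maximal finite subgroups $A\neq B$ of $G$ satisfy $A\cap B=1$.
   Context: $C_F(t)$ denotes the centralizer of $t$ in $F$. *)

theory Defs
  imports "HOL-Analysis.Analysis" "HOL-Algebra.Coset"
begin

definition topological_group :: "('a, 'b) monoid_scheme \<Rightarrow> 'a topology \<Rightarrow> bool" where
  "topological_group G T \<longleftrightarrow> group G \<and> topspace T = carrier G \<and>
     continuous_map (prod_topology T T) T (\<lambda>z. fst z \<otimes>\<^bsub>G\<^esub> snd z) \<and>
     continuous_map T T (\<lambda>x. inv\<^bsub>G\<^esub> x)"

definition profinite_group :: "('a, 'b) monoid_scheme \<Rightarrow> 'a topology \<Rightarrow> bool" where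
  "profinite_group G T \<longleftrightarrow> topological_group G T \<and> compact_space T \<and> Hausdorff_space T \<and>
     (\<forall>x\<in>topspace T. connected_component_of_set T x = {x})"

definition pro_p_group :: "nat \<Rightarrow> ('a, 'b) monoid_scheme \<Rightarrow> 'a topology \<Rightarrow> bool" where
  "pro_p_group p G T \<longleftrightarrow> profinite_group G T \<and>
     (\<forall>N. N \<lhd> G \<and> openin T N \<longrightarrow> (\<exists>k. card (rcosets\<^bsub>G\<^esub> N) = p ^ k))"

text \<open>Finite p-groups (represented on carriers of type nat; every finite group is
  isomorphic to such a one).\<close>
definition finite_p_group :: "nat \<Rightarrow> nat monoid \<Rightarrow> bool" where
  "finite_p_group p P \<longleftrightarrow> group P \<and> finite (carrier P) \<and> (\<exists>k. card (carrier P) = p ^ k)"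

text \<open>Free pro-p group on a set X converging to 1 (Ribes--Zalesskii): every map from X
  to a finite p-group sending almost all of X to 1 extends uniquely to a continuous
  homomorphism.\<close>
definition free_pro_p_group :: "nat \<Rightarrow> ('a, 'b) monoid_scheme \<Rightarrow> 'a topology \<Rightarrow> bool" where
  "free_pro_p_group p G T \<longleftrightarrow> pro_p_group p G T \<and>
     (\<exists>X \<subseteq> carrier G.
        (\<forall>U. openin T U \<and> \<one>\<^bsub>G\<^esub> \<in> U \<longrightarrow> finite (X - U)) \<and>
        (\<forall>(P :: nat monoid) \<phi>. finite_p_group p P \<and> \<phi> \<in> X \<rightarrow> carrier P \<and>
            finite {x \<in> X. \<phi> x \<noteq> \<one>\<^bsub>P\<^esub>} \<longrightarrow>
          (\<exists>h \<in> hom G P. continuous_map T (discrete_topology (carrier P)) h \<and>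
              (\<forall>x\<in>X. h x = \<phi> x) \<and>
              (\<forall>h' \<in> hom G P. continuous_map T (discrete_topology (carrier P)) h' \<and>
                  (\<forall>x\<in>X. h' x = \<phi> x) \<longrightarrow> (\<forall>g\<in>carrier G. h' g = h g)))))"

definition virtually_free_pro_p_group :: "nat \<Rightarrow> ('a, 'b) monoid_scheme \<Rightarrow> 'a topology \<Rightarrow> bool" where
  "virtually_free_pro_p_group p G T \<longleftrightarrow> pro_p_group p G T \<and>
     (\<exists>F. subgroup F G \<and> openin T F \<and>
          free_pro_p_group p (G\<lparr>carrier := F\<rparr>) (subtopology T F))"

definition centralizer_in :: "('a, 'b) monoid_scheme \<Rightarrow> 'a set \<Rightarrow> 'a \<Rightarrow> 'a set" where
  "centralizer_in G F t = {f \<in> F. f \<otimes>\<^bsub>G\<^esub> t = t \<otimes>\<^bsub>G\<^esub> f}"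

definition torsion_elem :: "('a, 'b) monoid_scheme \<Rightarrow> 'a \<Rightarrow> bool" where
  "torsion_elem G t \<longleftrightarrow> t \<in> carrier G \<and> t \<noteq> \<one>\<^bsub>G\<^esub> \<and> (\<exists>n::nat. n > 0 \<and> t [^]\<^bsub>G\<^esub> n = \<one>\<^bsub>G\<^esub>)"

definition maximal_finite_subgroup :: "('a, 'b) monoid_scheme \<Rightarrow> 'a set \<Rightarrow> bool" where
  "maximal_finite_subgroup G A \<longleftrightarrow> subgroup A G \<and> finite A \<and>
     (\<forall>B. subgroup B G \<and> finite B \<and> A \<subseteq> B \<longrightarrow> B = A)"

end

theory Submission
  imports Defs "HOL-Algebra.Group_Action" "HOL-Algebra.Multiplicative_Group"
begin

text \<open>A finite subgroup meets \<open>F\<close> trivially, since a nontrivial torsion element of \<open>F\<close> would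
  centralize itself; so it embeds into the finite \<open>p\<close>-group \<open>G/F\<close>, and finite subgroups are
  \<open>p\<close>-groups of bounded order, contained in maximal ones. If \<open>C = A \<inter> B \<noteq> 1\<close>, an element of \<open>F\<close>
  normalizing \<open>C\<close> has its commutators with \<open>C\<close> in \<open>C \<inter> F = 1\<close>, hence centralizes a torsion
  element and is trivial; so the normalizer of \<open>C\<close> is finite and lies in a maximal finite
  subgroup \<open>M\<close>. As normalizers grow in \<open>p\<close>-groups, a maximal finite \<open>X \<supset> C\<close> other than \<open>M\<close>
  meets \<open>M\<close> in a subgroup strictly larger than \<open>C\<close>; by induction on \<open>|G : F| - |A \<inter> B|\<close> this
  intersection is trivial, a contradiction. Hence \<open>A = M = B\<close>.\<close>

lemma (in group) finite_subgroup_pow_eq_one: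
  assumes H: "subgroup H G" and fin: "finite H" and x: "x \<in> H"
  shows "\<exists>n::nat. n > 0 \<and> x [^] n = \<one>"
proof -
  have xG: "x \<in> carrier G" using subgroup.mem_carrier[OF H x] .
  have "carrier (subgroup_generated G {x}) \<subseteq> H"
    using subgroup_generated_minimal[OF H] x by blast
  then have "ord x \<noteq> 0"
    using finite_cyclic_subgroup_order[OF xG] fin finite_subset by blast
  then show ?thesis using xG by auto
qed

lemma (in group) normalizer_iff:
  assumes "C \<subseteq> carrier G"
  shows "g \<in> normalizer G C \<longleftrightarrow> g \<in> carrier G \<and> g <# C #> inv g = C"
  using assms unfolding normalizer_def stabilizer_def by auto

lemma (in group) normalizer_finite_memI:
  assumes C: "C \<subseteq> carrier G" "finite C" and a: "a \<in> carrier G"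
    and conj: "\<And>c. c \<in> C \<Longrightarrow> a \<otimes> c \<otimes> inv a \<in> C"
  shows "a \<in> normalizer G C"
proof -
  have img: "a <# C #> inv a = (\<lambda>c. a \<otimes> c \<otimes> inv a) ` C"
    unfolding l_coset_def r_coset_def by auto
  have "inj_on (\<lambda>c. a \<otimes> c \<otimes> inv a) C"
  proof (rule inj_onI)
    fix x y assume "x \<in> C" "y \<in> C" "a \<otimes> x \<otimes> inv a = a \<otimes> y \<otimes> inv a"
    then show "x = y" using C a by (simp add: subset_iff)
  qed
  then have "card ((\<lambda>c. a \<otimes> c \<otimes> inv a) ` C) = card C" by (rule card_image)
  moreover have "(\<lambda>c. a \<otimes> c \<otimes> inv a) ` C \<subseteq> C" using conj by auto
  ultimately have "a <# C #> inv a = C" using img C(2) by (metis card_subset_eq)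
  then show ?thesis using normalizer_iff[OF C(1)] a by simp
qed

lemma (in group) subgroup_subset_normalizer:
  assumes "subgroup C G" "finite C"
  shows "C \<subseteq> normalizer G C"
proof
  fix c assume c: "c \<in> C"
  show "c \<in> normalizer G C"
  proof (rule normalizer_finite_memI)
    fix d assume "d \<in> C"
    then show "c \<otimes> d \<otimes> inv c \<in> C"
      using assms(1) c by (simp add: subgroup.m_closed subgroup.m_inv_closed)
  qed (use assms c subgroup.subset subgroup.mem_carrier in auto)
qed

lemma (in group_action) card_mod_prime_eq_card_fixed_points:
  assumes p: "prime p" and ord: "order G = p ^ n" and fin: "finite E"
  shows "card E mod p = card {x \<in> E. \<forall>g\<in>carrier G. \<phi> g x = x} mod p"
proof -
  interpret group G using group_hom group_hom.axioms(1) by blast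
  define S where "S = {x \<in> E. \<forall>g\<in>carrier G. \<phi> g x = x}"
  define f :: "_ \<Rightarrow> nat" where "f x = (if x \<in> S then 0 else 1)" for x
  have orbit_sum: "p dvd (\<Sum>y\<in>Q. f y)" if Q: "Q \<in> orbits G E \<phi>" for Q
  proof -
    obtain x where x: "x \<in> E" "Q = orbit G \<phi> x" using Q by (auto simp: orbits_def)
    have orbit_sub: "Q \<subseteq> E" using x(1) element_image unfolding x(2) orbit_def by blast
    show ?thesis
    proof (cases "x \<in> S")
      case True
      then have "orbit G \<phi> x \<subseteq> {x}" by (auto simp: orbit_def S_def)
      then have "Q = {x}" using x orbit_refl by blast
      then show ?thesis using True by (simp add: f_def)
    next
      case False
      have "y \<notin> S" if y: "y \<in> Q" for y
      proof
        assume yS: "y \<in> S"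
        obtain g where g: "g \<in> carrier G" "\<phi> g x = y" using y x by (auto simp: orbit_def)
        have "\<phi> (inv g) y = x" using orbit_sym_aux g x by blast
        moreover have "\<phi> (inv g) y = y" using yS g(1) by (simp add: S_def)
        ultimately have "y = x" by simp
        then show False using False yS by simp
      qed
      then have sum_eq: "(\<Sum>y\<in>Q. f y) = card Q" by (simp add: f_def)
      have "card Q dvd p ^ n"
        using orbit_stabilizer_theorem[OF x(1)] x(2) ord by (metis dvd_triv_left)
      then obtain j where j: "card Q = p ^ j" using divides_primepow_nat[OF p] by blast
      obtain g where g: "g \<in> carrier G" "\<phi> g x \<noteq> x" using False x by (auto simp: S_def)
      have "{x, \<phi> g x} \<subseteq> Q" using x g orbit_refl by (auto simp: orbit_def)
      then have "card {x, \<phi> g x} \<le> card Q" by (rule card_mono[OF finite_subset[OF orbit_sub fin]])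
      then have "card Q \<noteq> 1" using g(2) by auto
      then have "j \<noteq> 0" using j by auto
      then show ?thesis using sum_eq j by (simp add: dvd_power)
    qed
  qed
  have "card (E - S) = (\<Sum>x\<in>E. f x)" using fin by (simp add: f_def sum.If_cases Diff_eq)
  also have "\<dots> = (\<Sum>Q\<in>orbits G E \<phi>. \<Sum>y\<in>Q. f y)" by (rule disjoint_sum[OF fin, symmetric])
  finally obtain k where k: "card (E - S) = p * k" using orbit_sum by (metis dvd_sum dvdE)
  have "card E = card S + card (E - S)"
  proof -
    have "S \<subseteq> E" by (auto simp: S_def)
    then show ?thesis using fin card_Diff_subset[of S E] card_mono[of E S] finite_subset by fastforce
  qed
  with k show ?thesis unfolding S_def by simp
qed

lemma (in group) rcosets_right_mult_action:
  assumes "subgroup H G"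
  shows "group_action G (rcosets H) (\<lambda>g. \<lambda>X\<in>rcosets H. X #> inv g)"
proof -
  let ?E = "rcosets H"
  let ?\<phi> = "\<lambda>g. \<lambda>X\<in>rcosets H. X #> inv g"
  have Hs: "H \<subseteq> carrier G" using assms subgroup.subset by blast
  have closed: "X #> g \<in> ?E" if X: "X \<in> ?E" and g: "g \<in> carrier G" for X g
  proof -
    obtain a where a: "a \<in> carrier G" "X = H #> a" using X unfolding RCOSETS_def by blast
    then show ?thesis using coset_mult_assoc[OF Hs a(1) g] g rcosetsI[OF Hs] by simp
  qed
  have sub: "X \<subseteq> carrier G" if "X \<in> ?E" for X
    using that assms rcosets_part_G by auto
  have bij: "?\<phi> g \<in> Bij ?E" if g: "g \<in> carrier G" for g
  proof -
    have "bij_betw (?\<phi> g) ?E ?E"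
    proof (rule bij_betw_byWitness[where f'="\<lambda>X. X #> g"])
      show "\<forall>a\<in>?E. ?\<phi> g a #> g = a"
        using g sub by (auto simp: coset_mult_assoc)
      show "\<forall>a\<in>?E. ?\<phi> g (a #> g) = a"
        using g sub closed by (auto simp: coset_mult_assoc)
      show "?\<phi> g ` ?E \<subseteq> ?E" "(\<lambda>X. X #> g) ` ?E \<subseteq> ?E" using closed g by auto
    qed
    then show ?thesis unfolding Bij_def by auto
  qed
  have "?\<phi> \<in> hom G (BijGroup ?E)"
    unfolding hom_def
  proof (intro CollectI conjI ballI)
    show "?\<phi> \<in> carrier G \<rightarrow> carrier (BijGroup ?E)" using bij by (auto simp: BijGroup_def)
    fix x y assume x: "x \<in> carrier G" and y: "y \<in> carrier G"
    have "?\<phi> (x \<otimes> y) = compose ?E (?\<phi> x) (?\<phi> y)"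
    proof
      fix X show "?\<phi> (x \<otimes> y) X = compose ?E (?\<phi> x) (?\<phi> y) X"
        using x y closed sub by (auto simp: compose_def coset_mult_assoc inv_mult_group)
    qed
    then show "?\<phi> (x \<otimes> y) = ?\<phi> x \<otimes>\<^bsub>BijGroup ?E\<^esub> ?\<phi> y"
      using bij x y by (simp add: BijGroup_def)
  qed
  then show ?thesis unfolding group_action_def group_hom_def group_hom_axioms_def
    using group_BijGroup is_group by auto
qed

text \<open>Counting fixed points of \<open>H\<close> acting on \<open>G/H\<close> gives a coset \<open>H a \<noteq> H\<close> fixed by \<open>H\<close>,
  and then \<open>a\<close> normalizes \<open>H\<close>.\<close>
lemma (in group) p_group_normalizer_grows:
  assumes p: "prime p" and fin: "finite (carrier G)" and ord: "order G = p ^ n"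
    and H: "subgroup H G" and proper: "H \<noteq> carrier G"
  shows "\<exists>a \<in> carrier G - H. \<forall>h\<in>H. a \<otimes> h \<otimes> inv a \<in> H"
proof -
  let ?E = "rcosets H"
  let ?\<phi> = "\<lambda>g. \<lambda>X\<in>rcosets H. X #> inv g"
  let ?S = "{X \<in> ?E. \<forall>h\<in>H. ?\<phi> h X = X}"
  interpret action: group_action "G\<lparr>carrier := H\<rparr>" ?E ?\<phi>
    using group_action.induced_action[OF rcosets_right_mult_action[OF H] H] .
  have Hs: "H \<subseteq> carrier G" using H subgroup.subset by blast
  have lag: "card ?E * card H = p ^ n" using lagrange[OF H] ord by (simp add: order_def)
  have "p ^ n \<noteq> 0" using p by (simp add: prime_gt_0_nat)
  then have finE: "finite ?E" using lag card.infinite by fastforce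
  have "card H dvd p ^ n" "card ?E dvd p ^ n" using lag by (metis dvd_triv_right, metis dvd_triv_left)
  then obtain i j where i: "card H = p ^ i" and j: "card ?E = p ^ j"
    using divides_primepow_nat[OF p] by meson
  have "card ?E \<noteq> 1"
  proof
    assume "card ?E = 1"
    then have "card H = card (carrier G)" using lag ord by (simp add: order_def)
    then show False using proper Hs fin card_subset_eq by blast
  qed
  then have "p dvd card ?E" using j by (cases j) auto
  moreover have "card ?E mod p = card ?S mod p"
    using action.card_mod_prime_eq_card_fixed_points[OF p _ finE, of i] i by (simp add: order_def)
  ultimately have dvd_S: "p dvd card ?S" by (simp only: dvd_eq_mod_eq_0)
  have HS: "H \<in> ?S"
  proof -
    have "H \<in> ?E" using rcosetsI[OF Hs one_closed] Hs by simp
    moreover have "H #> inv h = H" if "h \<in> H" for h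
      using coset_join2[OF inv_closed[OF subgroup.mem_carrier[OF H that]] H] H that
      by (simp add: subgroup.m_inv_closed)
    ultimately show ?thesis by simp
  qed
  have "?S \<noteq> {H}"
  proof
    assume S: "?S = {H}"
    have "p dvd 1" using dvd_S unfolding S by simp
    then show False using p by simp
  qed
  then obtain X where X: "X \<in> ?S" "X \<noteq> H" using HS by blast
  obtain a where a: "a \<in> carrier G" "X = H #> a" using X(1) by (auto simp: RCOSETS_def)
  have "a \<notin> H" using X(2) a coset_join2[OF a(1) H] by blast
  moreover have "a \<otimes> h \<otimes> inv a \<in> H" if h: "h \<in> H" for h
  proof -
    have hG: "h \<in> carrier G" using h Hs by blast
    have "X #> inv (inv h) = X" using X(1) subgroup.m_inv_closed[OF H h] by auto
    then have "H #> (a \<otimes> h) = H #> a" using a hG Hs by (simp add: coset_mult_assoc)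
    then have "a \<otimes> h \<in> H #> a" using rcos_self[OF _ H, of "a \<otimes> h"] a hG by simp
    then show ?thesis using subgroup.rcos_module_imp[OF H is_group a(1)] by simp
  qed
  ultimately show ?thesis using a(1) by blast
qed

lemma (in group) p_subgroup_normalizer_grows:
  assumes p: "prime p" and X: "subgroup X G" "finite X" "card X = p ^ m"
    and C: "subgroup C G" "C \<subseteq> X" "C \<noteq> X"
  shows "\<exists>a \<in> X - C. a \<in> normalizer G C"
proof -
  interpret X: group "G\<lparr>carrier := X\<rparr>" using subgroup_imp_group[OF X(1)] .
  have "\<exists>a \<in> carrier (G\<lparr>carrier := X\<rparr>) - C.
      \<forall>c\<in>C. a \<otimes>\<^bsub>G\<lparr>carrier := X\<rparr>\<^esub> c \<otimes>\<^bsub>G\<lparr>carrier := X\<rparr>\<^esub> inv\<^bsub>G\<lparr>carrier := X\<rparr>\<^esub> a \<in> C"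
    by (rule X.p_group_normalizer_grows[OF p])
      (use X C subgroup_incl[OF C(1) X(1) C(2)] in \<open>auto simp: order_def\<close>)
  then obtain a where a: "a \<in> X - C" and conj: "\<forall>c\<in>C. a \<otimes> c \<otimes> inv\<^bsub>G\<lparr>carrier := X\<rparr>\<^esub> a \<in> C"
    by auto
  have aG: "a \<in> carrier G" using a subgroup.mem_carrier[OF X(1)] by blast
  have "a \<in> normalizer G C"
  proof (rule normalizer_finite_memI[OF subgroup.subset[OF C(1)] _ aG])
    show "finite C" using C(2) X(2) finite_subset by blast
    show "a \<otimes> c \<otimes> inv a \<in> C" if "c \<in> C" for c
      using conj that m_inv_consistent[OF X(1)] a by auto
  qed
  then show ?thesis using a by blast
qed

lemma maximal_finite_subgroup_subset_eq:
  assumes "maximal_finite_subgroup G A" "maximal_finite_subgroup G B" "A \<subseteq> B"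
  shows "A = B"
  using assms unfolding maximal_finite_subgroup_def by blast

locale trivial_torsion_centralizers = group G for G (structure) +
  fixes F :: "'a set" and p k :: nat
  assumes normal_F: "F \<lhd> G" and prime_p: "prime p" and index_F: "card (rcosets F) = p ^ k"
    and centralizer_trivial: "\<And>t. torsion_elem G t \<Longrightarrow> centralizer_in G F t = {\<one>}"
begin

lemma subgroup_F: "subgroup F G"
  using normal_F normal_imp_subgroup by blast

lemma finite_rcosets_F: "finite (rcosets F)"
proof -
  have "p ^ k \<noteq> 0" using prime_p by (simp add: prime_gt_0_nat)
  then show ?thesis using index_F by (metis card.infinite)
qed

lemma torsion_commuting_F_eq_one:
  assumes "torsion_elem G t" "f \<in> F" "f \<otimes> t = t \<otimes> f"
  shows "f = \<one>"
proof -
  have "f \<in> centralizer_in G F t" using assms(2,3) by (simp add: centralizer_in_def)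
  then show ?thesis using centralizer_trivial[OF assms(1)] by simp
qed

lemma finite_subgroup_inter_F:
  assumes H: "subgroup H G" and fin: "finite H"
  shows "H \<inter> F \<subseteq> {\<one>}"
proof
  fix x assume x: "x \<in> H \<inter> F"
  show "x \<in> {\<one>}"
  proof (rule ccontr)
    assume "x \<notin> {\<one>}"
    moreover have "x \<in> carrier G" using x subgroup.mem_carrier[OF H] by blast
    ultimately have "torsion_elem G x" unfolding torsion_elem_def
      using x finite_subgroup_pow_eq_one[OF H fin] by simp
    then show False using torsion_commuting_F_eq_one x \<open>x \<notin> {\<one>}\<close> by blast
  qed
qed

lemma subgroup_inter_F_trivial:
  assumes H: "subgroup H G" and triv: "H \<inter> F \<subseteq> {\<one>}"
  shows "finite H" "card H \<le> card (rcosets F)" "\<exists>m. card H = p ^ m"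
proof -
  interpret F: normal F G using normal_F .
  interpret quotient: group_hom G "G Mod F" "\<lambda>a. F #> a"
    unfolding group_hom_def group_hom_axioms_def
    using is_group F.factorgroup_is_group F.r_coset_hom_Mod by blast
  have HG: "\<And>h. h \<in> H \<Longrightarrow> h \<in> carrier G" using subgroup.mem_carrier[OF H] .
  have inj: "inj_on (\<lambda>h. F #> h) H"
  proof (rule inj_onI)
    fix a b assume a: "a \<in> H" and b: "b \<in> H" and eq: "F #> a = F #> b"
    have "a \<in> F #> b" using eq rcos_self[OF HG[OF a] subgroup_F] by simp
    then have "a \<otimes> inv b \<in> F" using subgroup.rcos_module_imp[OF subgroup_F is_group HG[OF b]] by simp
    moreover have "a \<otimes> inv b \<in> H" using a b subgroup.m_closed[OF H] subgroup.m_inv_closed[OF H] by simp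
    ultimately have "a \<otimes> inv b = \<one>" using triv by blast
    then have "a \<otimes> inv b \<otimes> b = b" using HG[OF b] by simp
    then show "a = b" using HG[OF a] HG[OF b] by (simp add: m_assoc)
  qed
  have image: "(\<lambda>h. F #> h) ` H \<subseteq> rcosets F"
    using HG rcosetsI[OF subgroup.subset[OF subgroup_F]] by auto
  show "finite H"
    using inj finite_imageD finite_subset[OF image finite_rcosets_F] by blast
  show "card H \<le> card (rcosets F)" using card_inj_on_le[OF inj image finite_rcosets_F] .
  have "card (rcosets\<^bsub>G Mod F\<^esub> ((\<lambda>h. F #> h) ` H)) * card ((\<lambda>h. F #> h) ` H) = order (G Mod F)"
    using group.lagrange[OF F.factorgroup_is_group quotient.subgroup_img_is_subgroup[OF H]] .
  moreover have "order (G Mod F) = p ^ k" using index_F by (simp add: order_def FactGroup_def)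
  ultimately have "card ((\<lambda>h. F #> h) ` H) dvd p ^ k" by (metis dvd_triv_right)
  then have "card H dvd p ^ k" using card_image[OF inj] by simp
  then show "\<exists>m. card H = p ^ m" using divides_primepow_nat[OF prime_p] by blast
qed

lemma normalizer_inter_F:
  assumes C: "subgroup C G" "finite C" "C \<noteq> {\<one>}"
  shows "normalizer G C \<inter> F \<subseteq> {\<one>}"
proof
  interpret F: normal F G using normal_F .
  have CG: "C \<subseteq> carrier G" using subgroup.subset[OF C(1)] .
  obtain c where c: "c \<in> C" "c \<noteq> \<one>" using C(3) subgroup.one_closed[OF C(1)] by blast
  have cG: "c \<in> carrier G" using c CG by blast
  have torsion: "torsion_elem G c" unfolding torsion_elem_def
    using c cG finite_subgroup_pow_eq_one[OF C(1,2) c(1)] by auto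
  fix f assume f: "f \<in> normalizer G C \<inter> F"
  have fG: "f \<in> carrier G" and conj: "f <# C #> inv f = C" and fF: "f \<in> F"
    using f normalizer_iff[OF CG] by auto
  have "f \<otimes> c \<otimes> inv f \<in> f <# C #> inv f"
    unfolding l_coset_def r_coset_def using c by auto
  then have "f \<otimes> c \<otimes> inv f \<in> C" using conj by simp
  then have commC: "f \<otimes> c \<otimes> inv f \<otimes> inv c \<in> C"
    using c subgroup.m_closed[OF C(1)] subgroup.m_inv_closed[OF C(1)] by simp
  have "c \<otimes> inv f \<otimes> inv c \<in> F"
    using F.inv_op_closed2[OF cG] fF subgroup.m_inv_closed[OF subgroup_F] by simp
  then have "f \<otimes> (c \<otimes> inv f \<otimes> inv c) \<in> F" using fF subgroup.m_closed[OF subgroup_F] by simp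
  then have commF: "f \<otimes> c \<otimes> inv f \<otimes> inv c \<in> F" using fG cG by (simp add: m_assoc)
  have "f \<otimes> c \<otimes> inv f \<otimes> inv c = \<one>"
    using commC commF finite_subgroup_inter_F[OF C(1,2)] by blast
  then have "inv (inv c) = f \<otimes> c \<otimes> inv f" using fG cG by (intro inv_equality) auto
  then have "c \<otimes> f = f \<otimes> c \<otimes> inv f \<otimes> f" using cG by simp
  then have "f \<otimes> c = c \<otimes> f" using fG cG by (simp add: m_assoc)
  then show "f \<in> {\<one>}" using torsion_commuting_F_eq_one[OF torsion fF] by simp
qed

lemma finite_subgroup_le_maximal:
  assumes H: "subgroup H G" "finite H"
  shows "\<exists>M. maximal_finite_subgroup G M \<and> H \<subseteq> M"
proof -
  let ?S = "{K. subgroup K G \<and> finite K \<and> H \<subseteq> K}"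
  have "card ` ?S \<subseteq> {..card (rcosets F)}"
  proof (rule image_subsetI)
    fix K assume "K \<in> ?S"
    then show "card K \<in> {..card (rcosets F)}"
      using subgroup_inter_F_trivial(2)[of K] finite_subgroup_inter_F[of K] by simp
  qed
  then have finS: "finite (card ` ?S)" using finite_subset by blast
  have "H \<in> ?S" using H by auto
  then have "Max (card ` ?S) \<in> card ` ?S" using Max_in[OF finS] by blast
  then obtain K where K: "K \<in> ?S" "card K = Max (card ` ?S)" by auto
  have "maximal_finite_subgroup G K" unfolding maximal_finite_subgroup_def
  proof (intro conjI allI impI)
    show "subgroup K G" "finite K" using K by auto
    fix B assume B: "subgroup B G \<and> finite B \<and> K \<subseteq> B"
    then have "card B \<le> card K" using K Max_ge[OF finS] by auto
    then show "B = K" using card_seteq[of B K] B by simp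
  qed
  then show ?thesis using K(1) by blast
qed

lemma maximal_finite_subgroup_p_power:
  assumes "maximal_finite_subgroup G A"
  shows "subgroup A G" "finite A" "\<exists>m. card A = p ^ m"
proof -
  show A: "subgroup A G" "finite A" using assms unfolding maximal_finite_subgroup_def by blast+
  show "\<exists>m. card A = p ^ m"
    using subgroup_inter_F_trivial(3)[OF A(1) finite_subgroup_inter_F[OF A]] .
qed

lemma maximal_finite_subgroups_inter:
  assumes "maximal_finite_subgroup G A" "maximal_finite_subgroup G B" "A \<noteq> B"
  shows "A \<inter> B = {\<one>}"
  using assms
proof (induction "card (rcosets F) - card (A \<inter> B)" arbitrary: A B rule: less_induct)
  case less
  let ?C = "A \<inter> B"
  note A = maximal_finite_subgroup_p_power[OF less.prems(1)]
  note B = maximal_finite_subgroup_p_power[OF less.prems(2)]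
  have C: "subgroup ?C G" "finite ?C" using subgroups_Inter_pair[OF A(1) B(1)] A(2) by auto
  show ?case
  proof (rule ccontr)
    assume nontrivial: "?C \<noteq> {\<one>}"
    have "subgroup (normalizer G ?C) G"
      using normalizer_imp_subgroup[OF subgroup.subset[OF C(1)]] .
    moreover have "finite (normalizer G ?C)"
      using subgroup_inter_F_trivial(1)[OF calculation normalizer_inter_F[OF C nontrivial]] .
    ultimately obtain M where M: "maximal_finite_subgroup G M" "normalizer G ?C \<subseteq> M"
      using finite_subgroup_le_maximal by blast
    have CM: "?C \<subseteq> M" using subgroup_subset_normalizer[OF C] M(2) by blast
    have eq_M: "X = M" if X: "maximal_finite_subgroup G X" "?C \<subseteq> X" "?C \<noteq> X" for X
    proof (rule ccontr)
      assume "X \<noteq> M"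
      note X' = maximal_finite_subgroup_p_power[OF X(1)]
      obtain m where m: "card X = p ^ m" using X'(3) by blast
      obtain a where a: "a \<in> X - ?C" "a \<in> normalizer G ?C"
        using p_subgroup_normalizer_grows[OF prime_p X'(1,2) m C(1) X(2,3)] by blast
      have XM: "subgroup (X \<inter> M) G" "finite (X \<inter> M)"
        using subgroups_Inter_pair[OF X'(1) maximal_finite_subgroup_p_power(1)[OF M(1)]] X'(2)
        by auto
      have "insert a ?C \<subseteq> X \<inter> M" using a M(2) X(2) CM by blast
      then have "card (insert a ?C) \<le> card (X \<inter> M)" by (rule card_mono[OF XM(2)])
      then have "card ?C < card (X \<inter> M)" using a(1) C(2) by simp
      moreover have "card (X \<inter> M) \<le> card (rcosets F)"
        using subgroup_inter_F_trivial(2)[OF XM(1) finite_subgroup_inter_F[OF XM]] .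
      ultimately have "X \<inter> M = {\<one>}"
        using less.hyps[OF _ X(1) M(1) \<open>X \<noteq> M\<close>] by linarith
      then show False using X(2) CM nontrivial subgroup.one_closed[OF C(1)] by blast
    qed
    have "?C \<noteq> A"
    proof
      assume "?C = A"
      then have "A = B" using maximal_finite_subgroup_subset_eq[OF less.prems(1,2)] by blast
      then show False using less.prems(3) by simp
    qed
    moreover have "?C \<noteq> B"
    proof
      assume "?C = B"
      then have "B = A" using maximal_finite_subgroup_subset_eq[OF less.prems(2,1)] by blast
      then show False using less.prems(3) by simp
    qed
    ultimately have "A = M" "B = M" using eq_M less.prems(1,2) by auto
    then show False using less.prems(3) by simp
  qed
qed

end

theorem mainTheorem6:
  fixes p :: nat and G :: "('a, 'b) monoid_scheme" and T :: "'a topology" and F :: "'a set"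
  assumes "prime p"
    and "virtually_free_pro_p_group p G T"
    and "F \<lhd> G" and "openin T F"
    and "free_pro_p_group p (G\<lparr>carrier := F\<rparr>) (subtopology T F)"
    and "\<forall>t. torsion_elem G t \<longrightarrow> centralizer_in G F t = {\<one>\<^bsub>G\<^esub>}"
    and "maximal_finite_subgroup G A" and "maximal_finite_subgroup G B" and "A \<noteq> B"
  shows "A \<inter> B = {\<one>\<^bsub>G\<^esub>}"
proof -
  \<comment> \<open>Of the topological hypotheses only the group structure and the \<open>p\<close>-power index of \<open>F\<close> are used.\<close>
  have pro_p: "pro_p_group p G T"
    using assms(2) unfolding virtually_free_pro_p_group_def by blast
  then have "group G"
    unfolding pro_p_group_def profinite_group_def topological_group_def by blast
  moreover obtain k where "card (rcosets\<^bsub>G\<^esub> F) = p ^ k"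
    using pro_p assms(3,4) unfolding pro_p_group_def by blast
  ultimately interpret trivial_torsion_centralizers G F p k
    unfolding trivial_torsion_centralizers_def trivial_torsion_centralizers_axioms_def
    using assms(1,3,6) by blast
  show ?thesis using maximal_finite_subgroups_inter[OF assms(7-9)] .
qed

end
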